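(* Let $(T,A,m|_A)$ be a nonsingular open dynamical system with $m(A_\infty)=0$. Fix $\alpha\in(0,1)$ and a finite measurable partition $\mathcal B_n=\{B_1,\dots,B_n\}$ of $A$, and let $\hat A$ be the reduced domain obtained with test functions $\psi_j=\mathbf 1_{B_j}$. Then $\hat A$ is the union of those $B_k$ for which either $k\leadsto k$, or there is at least one $i$ with $i\leadsto i$ and $i\leadsto k$. In particular, $\hat A$ is measurable.
   Context: Let $(X,m)$ be a measure space, $A\subsetneq X$ measurable and $T:A\to X$ measurable such that: $H_0:=T(A)\setminus A$ is measurable; $m(A\cap T^{-1}H_0)>0$; $m(E)>0$ whenever $E\subseteq X$ is measurable with $m(T^{-1}E)>0$; and $T$ is locally finite-to-one (a nonsingular open dynamical system). Preimages are taken in $A$: $T^{-1}E=\{y\in A:T(y)\in E\}$. $A_n=\{x:x,T(x),\dots,T^n(x)\in A\}$, $A_\infty=\bigcap_nA_n$, $H_1=A\setminus A_1$. $\mathbf 1_{A_1}\psi\circ T$ is $\psi\circ T$ on $A_1$ and $0$ elsewhere in $A$. Define $\mathcal M^*:\mathbb R^{n+1}\to L^\infty(A;m)$ by $\mathcal M^*\lambda=\lambda_0\mathbf 1_{A_1}+\sum_{j=1}^n\lambda_j(\mathbf 1_{A_1}\psi_j\circ T-\alpha\psi_j)$ with $\psi_j=\mathbf 1_{B_j}$. The reduced domain $\hat A$ is obtained from $A$ by removing the support $\{\mathcal M^*\lambda\neq0\}$ of every $\mathcal M^*\lambda$ with $\lambda\in\mathbb R^{n+1}$, $\lambda_0=0$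 and $\mathcal M^*\lambda\le0$ $m$-a.e. Let $C$ be the $n\times n$ matrix $C_{kj}=m(B_k\cap T^{-1}B_j)$. Write $k\leadsto j$ if $(C^N)_{kj}>0$ for some integer $N>0$. *)

theory Defs
  imports "HOL-Analysis.Analysis"
begin

definition preim :: "'a set \<Rightarrow> ('a \<Rightarrow> 'a) \<Rightarrow> 'a set \<Rightarrow> 'a set" where
  "preim A T E = {y \<in> A. T y \<in> E}"

definition An :: "'a set \<Rightarrow> ('a \<Rightarrow> 'a) \<Rightarrow> nat \<Rightarrow> 'a set" where
  "An A T n = {x. \<forall>i\<le>n. (T ^^ i) x \<in> A}"

definition Ainf :: "'a set \<Rightarrow> ('a \<Rightarrow> 'a) \<Rightarrow> 'a set" where
  "Ainf A T = (\<Inter>n. An A T n)"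

definition locally_finite_to_one :: "'a measure \<Rightarrow> 'a set \<Rightarrow> ('a \<Rightarrow> 'a) \<Rightarrow> bool" where
  "locally_finite_to_one M A T \<longleftrightarrow> (\<forall>x\<in>space M. finite (preim A T {x}))"

definition nonsingular_open_system :: "'a measure \<Rightarrow> 'a set \<Rightarrow> ('a \<Rightarrow> 'a) \<Rightarrow> bool" where
  "nonsingular_open_system M A T \<longleftrightarrow>
     A \<in> sets M \<and> A \<subset> space M \<and>
     T \<in> restrict_space M A \<rightarrow>\<^sub>M M \<and>
     T ` A - A \<in> sets M \<and>
     emeasure M (preim A T (T ` A - A)) > 0 \<and>
     (\<forall>E\<in>sets M. emeasure M (preim A T E) > 0 \<longrightarrow> emeasure M E > 0) \<and>
     locally_finite_to_one M A T"

text \<open>The function M^* lambda (pointwise representative), with psi_j = indicator of B j,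
  j = 1..n; lambda_0 = lam 0.\<close>
definition Mstar :: "'a set \<Rightarrow> ('a \<Rightarrow> 'a) \<Rightarrow> (nat \<Rightarrow> 'a set) \<Rightarrow> nat \<Rightarrow> real
      \<Rightarrow> (nat \<Rightarrow> real) \<Rightarrow> 'a \<Rightarrow> real" where
  "Mstar A T B n \<alpha> lam x =
     lam 0 * indicator (An A T 1) x +
     (\<Sum>j\<in>{1..n}. lam j * (indicator (An A T 1) x * indicator (B j) (T x)
                             - \<alpha> * indicator (B j) x))"

definition reduced_domain :: "'a measure \<Rightarrow> 'a set \<Rightarrow> ('a \<Rightarrow> 'a) \<Rightarrow> (nat \<Rightarrow> 'a set)
      \<Rightarrow> nat \<Rightarrow> real \<Rightarrow> 'a set" where
  "reduced_domain M A T B n \<alpha> =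
     A - (\<Union>{ {x \<in> A. Mstar A T B n \<alpha> lam x \<noteq> 0} | lam.
              lam 0 = 0 \<and> (AE x in M. x \<in> A \<longrightarrow> Mstar A T B n \<alpha> lam x \<le> 0)})"

definition Cmat :: "'a measure \<Rightarrow> 'a set \<Rightarrow> ('a \<Rightarrow> 'a) \<Rightarrow> (nat \<Rightarrow> 'a set) \<Rightarrow> nat \<Rightarrow> nat \<Rightarrow> ennreal" where
  "Cmat M A T B k j = emeasure M (B k \<inter> preim A T (B j))"

fun matpow :: "(nat \<Rightarrow> nat \<Rightarrow> ennreal) \<Rightarrow> nat \<Rightarrow> nat \<Rightarrow> nat \<Rightarrow> nat \<Rightarrow> ennreal" where
  "matpow C n 0 = (\<lambda>k j. if k = j then 1 else 0)"
| "matpow C n (Suc N) = (\<lambda>k j. \<Sum>l\<in>{1..n}. matpow C n N k l * C l j)"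

definition leadsto :: "(nat \<Rightarrow> nat \<Rightarrow> ennreal) \<Rightarrow> nat \<Rightarrow> nat \<Rightarrow> nat \<Rightarrow> bool" where
  "leadsto C n k j \<longleftrightarrow> (\<exists>N>0. matpow C n N k j > 0)"

end

(* An admissible \<lambda> (\<lambda>\<^sub>0 = 0 and M\<^sup>*\<lambda> \<le> 0 a.e.) satisfies \<lambda>\<^sub>j \<le> \<alpha> \<lambda>\<^sub>k along every edge k \<rightarrow> j of
   C, and \<lambda>\<^sub>k \<ge> 0 on every cell of positive measure: the cells where \<lambda> < 0 are mapped into
   themselves almost everywhere, which forces them to be null because m(A\<^sub>\<infinity>) = 0.  Going around a
   cycle gives \<lambda>\<^sub>i \<le> \<alpha>\<^sup>N \<lambda>\<^sub>i, so \<lambda> vanishes on cycles and on everything reachable from them, and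
   there M\<^sup>*\<lambda> = 0 almost everywhere.  On the remaining cells a single admissible \<lambda> makes M\<^sup>*\<lambda>
   strictly negative: a potential that decreases by more than the factor \<alpha> along every edge,
   obtained from the number of vertices reachable from a cell.  Measurability holds because M\<^sup>*\<lambda>
   only depends on the cells containing x and T x. *)

theory Submission
  imports Defs
begin

lemma mem_funpow_preim_iff:
  "y \<in> (preim A T ^^ r) E \<longleftrightarrow> (\<forall>m<r. (T ^^ m) y \<in> A) \<and> (T ^^ r) y \<in> E"
proof (induction r arbitrary: y)
  case 0
  then show ?case by simp
next
  case (Suc r)
  have "y \<in> (preim A T ^^ Suc r) E \<longleftrightarrow> y \<in> A \<and> T y \<in> (preim A T ^^ r) E"
    by (simp add: preim_def)
  also have "\<dots> \<longleftrightarrow> (\<forall>m<Suc r. (T ^^ m) y \<in> A) \<and> (T ^^ Suc r) y \<in> E"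
    by (simp add: Suc.IH All_less_Suc2 funpow_Suc_right del: funpow.simps)
  finally show ?case .
qed

lemma An_eq_funpow_preim: "An A T m = (preim A T ^^ m) A"
  by (auto simp: An_def mem_funpow_preim_iff le_less)

lemma matpow_Suc_pos_iff:
  "matpow C n (Suc N) k j > 0 \<longleftrightarrow> (\<exists>l\<in>{1..n}. matpow C n N k l > 0 \<and> C l j > 0)"
  by (simp add: zero_less_iff_neq_zero[of "sum _ _"] ennreal_zero_less_mult_iff)
     (auto simp: zero_less_iff_neq_zero)

lemma matpow_add_pos:
  assumes "matpow C n a k l > 0" "matpow C n b l j > 0"
  shows "matpow C n (a + b) k j > 0"
  using assms(2)
proof (induction b arbitrary: j)
  case 0
  then show ?case using assms(1) by (simp split: if_splits)
next
  case (Suc b)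
  then obtain m where "m \<in> {1..n}" "matpow C n b l m > 0" "C m j > 0"
    using matpow_Suc_pos_iff by blast
  with Suc.IH show ?case by (metis add_Suc_right matpow_Suc_pos_iff)
qed

lemma leadsto_trans: "leadsto C n k l \<Longrightarrow> leadsto C n l j \<Longrightarrow> leadsto C n k j"
  unfolding leadsto_def by (metis add_pos_pos matpow_add_pos)

lemma leadsto_edge: "k \<in> {1..n} \<Longrightarrow> C k j > 0 \<Longrightarrow> leadsto C n k j"
  unfolding leadsto_def
  by (rule exI[of _ "Suc 0"], subst matpow_Suc_pos_iff) auto

definition cycle_reachable :: "(nat \<Rightarrow> nat \<Rightarrow> ennreal) \<Rightarrow> nat \<Rightarrow> nat set" where
  "cycle_reachable C n =
     {k \<in> {1..n}. leadsto C n k k \<or> (\<exists>i\<in>{1..n}. leadsto C n i i \<and> leadsto C n i k)}"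

lemma cycle_reachable_edge:
  assumes "k \<in> cycle_reachable C n" "j \<in> {1..n}" "C k j > 0"
  shows "j \<in> cycle_reachable C n"
proof -
  have "k \<in> {1..n}" using assms(1) by (simp add: cycle_reachable_def)
  then have "leadsto C n k j" using assms(3) by (rule leadsto_edge)
  with assms(1,2) show ?thesis
    unfolding cycle_reachable_def by (blast intro: leadsto_trans)
qed

definition escape_potential :: "(nat \<Rightarrow> nat \<Rightarrow> ennreal) \<Rightarrow> nat \<Rightarrow> real \<Rightarrow> nat \<Rightarrow> real" where
  "escape_potential C n \<alpha> k =
     (if k \<in> {1..n} - cycle_reachable C n
      then (1 + 1 / \<alpha>) ^ card {j \<in> {1..n}. leadsto C n k j} else 0)"

lemma escape_potential_pos:
  assumes "\<alpha> > 0" "k \<in> {1..n} - cycle_reachable C n"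
  shows "escape_potential C n \<alpha> k > 0"
proof -
  have "1 + 1 / \<alpha> > 0" using assms(1) by (simp add: add_pos_pos)
  then show ?thesis unfolding escape_potential_def if_P[OF assms(2)] by (rule zero_less_power)
qed

lemma escape_potential_eq_0:
  "k \<notin> {1..n} - cycle_reachable C n \<Longrightarrow> escape_potential C n \<alpha> k = 0"
  unfolding escape_potential_def by (rule if_not_P)

lemma escape_potential_decreasing:
  assumes \<alpha>: "\<alpha> > 0" and k: "k \<in> {1..n} - cycle_reachable C n"
    and j: "j \<in> {1..n}" and edge: "C k j > 0"
  shows "escape_potential C n \<alpha> j < \<alpha> * escape_potential C n \<alpha> k"
proof (cases "j \<in> cycle_reachable C n")
  case True
  then show ?thesis using escape_potential_pos[OF \<alpha> k] \<alpha>
    by (simp add: escape_potential_eq_0)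
next
  case False
  define reach where "reach i = {l \<in> {1..n}. leadsto C n i l}" for i
  have kj: "leadsto C n k j" using k edge by (blast intro: leadsto_edge)
  \<comment> \<open>\<open>j\<close> lies on no cycle, so it reaches strictly fewer vertices than \<open>k\<close>.\<close>
  have "reach j \<subset> reach k"
    using kj j False unfolding reach_def cycle_reachable_def by (blast intro: leadsto_trans)
  then have "card (reach j) < card (reach k)"
    by (rule psubset_card_mono[rotated]) (simp add: reach_def)
  then obtain d where d: "card (reach k) = Suc (card (reach j) + d)"
    using less_iff_Suc_add by auto
  define c where "c = 1 + 1 / \<alpha>"
  have c: "c \<ge> 1" "\<alpha> * c = \<alpha> + 1" using \<alpha> by (auto simp: c_def field_simps)
  have "c ^ card (reach j) \<le> c ^ (card (reach j) + d)"
    using c by (intro power_increasing) auto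
  also have "\<dots> < (\<alpha> + 1) * c ^ (card (reach j) + d)"
    using \<alpha> c by (simp add: add_pos_pos)
  also have "\<dots> = \<alpha> * c ^ card (reach k)"
    using c by (simp add: d mult.assoc[symmetric])
  finally show ?thesis
    using k j False by (simp add: escape_potential_def reach_def c_def)
qed

lemma subset_Ainf_Un_funpow_preim_exits:
  assumes "U \<subseteq> A"
  shows "U \<subseteq> Ainf A T \<union> (\<Union>r. (preim A T ^^ r) (U - preim A T U))"
proof
  fix x assume x: "x \<in> U"
  show "x \<in> Ainf A T \<union> (\<Union>r. (preim A T ^^ r) (U - preim A T U))"
  proof (cases "x \<in> (\<Union>r. (preim A T ^^ r) (U - preim A T U))")
    case False
    have "\<forall>m\<le>i. (T ^^ m) x \<in> U" for i
    proof (induction i)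
      case 0
      show ?case using x by simp
    next
      case (Suc i)
      have "(T ^^ Suc i) x \<in> U"
      proof (rule ccontr)
        assume "(T ^^ Suc i) x \<notin> U"
        then have "(T ^^ i) x \<in> U - preim A T U"
          using Suc.IH by (auto simp: preim_def)
        moreover have "\<forall>m<i. (T ^^ m) x \<in> A"
          using Suc.IH assms by force
        ultimately have "x \<in> (preim A T ^^ i) (U - preim A T U)"
          by (simp add: mem_funpow_preim_iff)
        with False show False by blast
      qed
      then show ?case using Suc.IH by (auto simp: le_Suc_eq)
    qed
    then have "x \<in> Ainf A T" using assms by (force simp: Ainf_def An_def)
    then show ?thesis by blast
  qed blast
qed

lemma Collect_in_sets_if_constant:
  assumes "S \<in> sets M" "\<And>x y. x \<in> S \<Longrightarrow> y \<in> S \<Longrightarrow> P x \<longleftrightarrow> P y"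
  shows "{x \<in> S. P x} \<in> sets M"
proof (cases "\<exists>x\<in>S. P x")
  case True
  then have "{x \<in> S. P x} = S" using assms(2) by blast
  then show ?thesis using assms(1) by simp
next
  case False
  then have "{x \<in> S. P x} = {}" by blast
  then show ?thesis by (metis sets.empty_sets)
qed

locale nonsingular_open =
  fixes M :: "'a measure" and A :: "'a set" and T :: "'a \<Rightarrow> 'a"
  assumes system: "nonsingular_open_system M A T"
begin

lemma sets_A: "A \<in> sets M"
  and measurable_T: "T \<in> restrict_space M A \<rightarrow>\<^sub>M M"
  and emeasure_pos_if_preim_pos: "E \<in> sets M \<Longrightarrow> emeasure M (preim A T E) > 0 \<Longrightarrow> emeasure M E > 0"
  using system unfolding nonsingular_open_system_def by auto

lemma sets_preim:
  assumes "E \<in> sets M"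
  shows "preim A T E \<in> sets M"
proof -
  have "T -` E \<inter> space (restrict_space M A) \<in> sets (restrict_space M A)"
    using measurable_T assms by (rule measurable_sets)
  moreover have "T -` E \<inter> space (restrict_space M A) = preim A T E"
    using sets_A by (auto simp: preim_def)
  ultimately show ?thesis
    using sets_A by (simp add: sets_restrict_space_iff)
qed

lemma null_sets_preim:
  assumes "E \<in> null_sets M"
  shows "preim A T E \<in> null_sets M"
proof -
  have "preim A T E \<in> sets M" using assms by (auto intro: sets_preim)
  moreover have "emeasure M (preim A T E) = 0"
    using emeasure_pos_if_preim_pos[of E] assms by (auto simp: zero_less_iff_neq_zero)
  ultimately show ?thesis by (intro null_setsI)
qed

lemma sets_funpow_preim: "E \<in> sets M \<Longrightarrow> (preim A T ^^ r) E \<in> sets M"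
  by (induction r) (auto intro: sets_preim)

lemma null_sets_funpow_preim: "E \<in> null_sets M \<Longrightarrow> (preim A T ^^ r) E \<in> null_sets M"
  by (induction r) (auto intro: null_sets_preim)

lemma sets_Ainf: "Ainf A T \<in> sets M"
  unfolding Ainf_def An_eq_funpow_preim using sets_A sets_funpow_preim by blast

text \<open>Up to the null set \<open>A\<^sub>\<infinity>\<close>, every point of \<open>U\<close> leaves \<open>U\<close> at some time \<open>r\<close>, i.e. lies in
  the \<open>r\<close>-th preimage of the null set of exit points.\<close>
lemma null_if_AE_invariant:
  assumes Ainf: "emeasure M (Ainf A T) = 0"
    and U: "U \<in> sets M" "U \<subseteq> A"
    and invariant: "AE x in M. x \<in> U \<longrightarrow> T x \<in> U"
  shows "U \<in> null_sets M"
proof -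
  define exits where "exits = U - preim A T U"
  have exits: "exits \<in> sets M" using U sets_preim by (auto simp: exits_def)
  moreover have "{x \<in> space M. \<not> (x \<in> U \<longrightarrow> T x \<in> U)} = exits"
    using U sets.sets_into_space by (auto simp: exits_def preim_def)
  ultimately have "emeasure M exits = 0"
    using invariant by (simp add: AE_iff_measurable)
  then have "(preim A T ^^ r) exits \<in> null_sets M" for r
    using exits by (intro null_sets_funpow_preim null_setsI)
  moreover have "Ainf A T \<in> null_sets M" using Ainf sets_Ainf by (rule null_setsI)
  ultimately have "Ainf A T \<union> (\<Union>r. (preim A T ^^ r) exits) \<in> null_sets M"
    by (intro null_sets.Un null_sets_UN)
  moreover have "U \<subseteq> Ainf A T \<union> (\<Union>r. (preim A T ^^ r) exits)"
    using U(2) unfolding exits_def by (rule subset_Ainf_Un_funpow_preim_exits)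
  ultimately show ?thesis using U(1) null_sets_subset by blast
qed

end

locale partitioned_open_system = nonsingular_open M A T
  for M :: "'a measure" and A :: "'a set" and T :: "'a \<Rightarrow> 'a" +
  fixes B :: "nat \<Rightarrow> 'a set" and n :: nat and \<alpha> :: real
  assumes Ainf_null: "emeasure M (Ainf A T) = 0"
    and alpha_pos: "0 < \<alpha>" and alpha_less_1: "\<alpha> < 1"
    and sets_B: "k \<in> {1..n} \<Longrightarrow> B k \<in> sets M"
    and disjoint_B: "k \<in> {1..n} \<Longrightarrow> j \<in> {1..n} \<Longrightarrow> k \<noteq> j \<Longrightarrow> B k \<inter> B j = {}"
    and Union_B: "(\<Union>k\<in>{1..n}. B k) = A"
begin

abbreviation "C \<equiv> Cmat M A T B"
abbreviation "R \<equiv> cycle_reachable C n"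

lemma B_subset_A: "k \<in> {1..n} \<Longrightarrow> B k \<subseteq> A"
  using Union_B by blast

lemma cellE:
  assumes "x \<in> A"
  obtains k where "k \<in> {1..n}" "x \<in> B k"
  using assms Union_B by blast

lemma cell_unique: "k \<in> {1..n} \<Longrightarrow> j \<in> {1..n} \<Longrightarrow> x \<in> B k \<Longrightarrow> x \<in> B j \<Longrightarrow> k = j"
  using disjoint_B by blast

definition step_fun :: "(nat \<Rightarrow> real) \<Rightarrow> 'a \<Rightarrow> real" where
  "step_fun lam y = (\<Sum>j\<in>{1..n}. lam j * indicator (B j) y)"

lemma step_fun_cell:
  assumes "k \<in> {1..n}" "y \<in> B k"
  shows "step_fun lam y = lam k"
proof -
  have "(\<Sum>j\<in>{1..n}. lam j * indicator (B j) y) = (\<Sum>j\<in>{1..n}. if j = k then lam j else 0)"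
    using assms cell_unique by (intro sum.cong) (auto simp: indicator_def)
  then show ?thesis using assms(1) by (simp add: step_fun_def)
qed

lemma step_fun_outside:
  assumes "y \<notin> A"
  shows "step_fun lam y = 0"
proof -
  have "y \<notin> B j" if "j \<in> {1..n}" for j
    using assms B_subset_A[OF that] by blast
  then show ?thesis by (simp add: step_fun_def)
qed

lemma Mstar_eq_step_fun:
  assumes "x \<in> A" "lam 0 = 0"
  shows "Mstar A T B n \<alpha> lam x = step_fun lam (T x) - \<alpha> * step_fun lam x"
proof -
  have summand: "lam j * (indicator (An A T 1) x * indicator (B j) (T x) - \<alpha> * indicator (B j) x)
      = lam j * indicator (B j) (T x) - \<alpha> * (lam j * indicator (B j) x)"
    if "j \<in> {1..n}" for j
    using assms(1) B_subset_A[OF that] by (auto simp: An_def indicator_def le_Suc_eq algebra_simps)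
  have "Mstar A T B n \<alpha> lam x =
      (\<Sum>j\<in>{1..n}. lam j * indicator (B j) (T x) - \<alpha> * (lam j * indicator (B j) x))"
    unfolding Mstar_def assms(2) mult_zero_left add_0 by (rule sum.cong[OF refl summand])
  then show ?thesis by (simp only: step_fun_def sum_subtractf sum_distrib_left)
qed

lemma Mstar_transition:
  assumes "lam 0 = 0" "k \<in> {1..n}" "j \<in> {1..n}" "x \<in> B k" "T x \<in> B j"
  shows "Mstar A T B n \<alpha> lam x = lam j - \<alpha> * lam k"
  using assms B_subset_A by (subst Mstar_eq_step_fun) (auto simp: step_fun_cell)

lemma Mstar_escape:
  assumes "lam 0 = 0" "k \<in> {1..n}" "x \<in> B k" "T x \<notin> A"
  shows "Mstar A T B n \<alpha> lam x = - \<alpha> * lam k"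
  using assms B_subset_A by (subst Mstar_eq_step_fun) (auto simp: step_fun_cell step_fun_outside)

definition admissible :: "(nat \<Rightarrow> real) \<Rightarrow> bool" where
  "admissible lam \<longleftrightarrow> lam 0 = 0 \<and> (AE x in M. x \<in> A \<longrightarrow> Mstar A T B n \<alpha> lam x \<le> 0)"

lemma mem_reduced_domain_iff:
  "x \<in> reduced_domain M A T B n \<alpha> \<longleftrightarrow>
     x \<in> A \<and> (\<forall>lam. admissible lam \<longrightarrow> Mstar A T B n \<alpha> lam x = 0)"
  unfolding reduced_domain_def admissible_def by blast

lemma sets_transition: "k \<in> {1..n} \<Longrightarrow> j \<in> {1..n} \<Longrightarrow> B k \<inter> preim A T (B j) \<in> sets M"
  using sets_B sets_preim by blast

lemma admissible_edge:
  assumes adm: "admissible lam" and k: "k \<in> {1..n}" and j: "j \<in> {1..n}" and edge: "C k j > 0"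
  shows "lam j \<le> \<alpha> * lam k"
proof (rule ccontr)
  assume "\<not> lam j \<le> \<alpha> * lam k"
  then have "AE x in M. x \<notin> B k \<inter> preim A T (B j)"
    using adm unfolding admissible_def
    by (auto elim!: eventually_mono simp: preim_def Mstar_transition[OF _ k j])
  then have "B k \<inter> preim A T (B j) \<in> null_sets M"
    using sets_transition[OF k j] by (simp add: AE_iff_null_sets)
  then show False using edge by (auto dest: null_setsD1 simp: Cmat_def)
qed

lemma step_fun_neg_iff:
  "step_fun lam y < 0 \<longleftrightarrow> y \<in> (\<Union>i\<in>{i \<in> {1..n}. lam i < 0}. B i)"
proof (cases "y \<in> A")
  case True
  then obtain k where "k \<in> {1..n}" "y \<in> B k" by (rule cellE)
  then show ?thesis using cell_unique by (auto simp: step_fun_cell)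
next
  case False
  then show ?thesis using B_subset_A by (auto simp: step_fun_outside)
qed

lemma admissible_nonneg:
  assumes adm: "admissible lam" and k: "k \<in> {1..n}" and pos: "emeasure M (B k) > 0"
  shows "lam k \<ge> 0"
proof (rule ccontr)
  assume "\<not> lam k \<ge> 0"
  define U where "U = (\<Union>i\<in>{i \<in> {1..n}. lam i < 0}. B i)"
  have U: "U \<in> sets M" "U \<subseteq> A" using sets_B B_subset_A by (auto simp: U_def)
  have "AE x in M. x \<in> U \<longrightarrow> T x \<in> U"
    using adm unfolding admissible_def
  proof (elim conjE eventually_mono, intro impI)
    fix x assume "lam 0 = 0" "x \<in> A \<longrightarrow> Mstar A T B n \<alpha> lam x \<le> 0" "x \<in> U"
    then have "step_fun lam (T x) \<le> \<alpha> * step_fun lam x" "step_fun lam x < 0"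
      using U(2) step_fun_neg_iff[of lam x] by (auto simp: U_def Mstar_eq_step_fun)
    moreover have "\<alpha> * step_fun lam x < 0"
      using alpha_pos \<open>step_fun lam x < 0\<close> by (rule mult_pos_neg)
    ultimately have "step_fun lam (T x) < 0" by linarith
    then show "T x \<in> U" by (simp add: step_fun_neg_iff U_def)
  qed
  then have "U \<in> null_sets M" using Ainf_null U by (intro null_if_AE_invariant)
  moreover have "B k \<subseteq> U" using k \<open>\<not> lam k \<ge> 0\<close> by (auto simp: U_def)
  ultimately have "B k \<in> null_sets M" using sets_B[OF k] by (blast intro: null_sets_subset)
  then show False using pos by (auto dest: null_setsD1)
qed

lemma emeasure_B_pos_if_matpow_pos:
  assumes k: "k \<in> {1..n}" and path: "matpow C n (Suc N) i k > 0"
  shows "emeasure M (B k) > 0"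
proof -
  obtain l where "C l k > 0" using path matpow_Suc_pos_iff by blast
  moreover have "C l k \<le> emeasure M (preim A T (B k))"
    unfolding Cmat_def using sets_B[OF k] by (auto intro!: emeasure_mono sets_preim)
  ultimately show ?thesis using emeasure_pos_if_preim_pos sets_B[OF k] by auto
qed

lemma admissible_path:
  assumes adm: "admissible lam"
  shows "k \<in> {1..n} \<Longrightarrow> matpow C n N i k > 0 \<Longrightarrow> lam k \<le> \<alpha> ^ N * lam i"
proof (induction N arbitrary: k)
  case 0
  then show ?case by (simp split: if_splits)
next
  case (Suc N)
  then obtain l where l: "l \<in> {1..n}" "matpow C n N i l > 0" "C l k > 0"
    using matpow_Suc_pos_iff by blast
  have "lam k \<le> \<alpha> * lam l" using admissible_edge[OF adm l(1) Suc.prems(1) l(3)] .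
  also have "\<dots> \<le> \<alpha> * (\<alpha> ^ N * lam i)" using Suc.IH[OF l(1,2)] alpha_pos by simp
  finally show ?case by (simp add: mult.assoc)
qed

lemma admissible_leadsto:
  assumes adm: "admissible lam" and k: "k \<in> {1..n}" and "leadsto C n i k"
  obtains N where "N > 0" "0 \<le> lam k" "lam k \<le> \<alpha> ^ N * lam i"
proof -
  obtain N where "N > 0" "matpow C n N i k > 0"
    using assms(3) unfolding leadsto_def by blast
  moreover from \<open>N > 0\<close> obtain N' where "N = Suc N'" using gr0_implies_Suc by blast
  ultimately show ?thesis
    using that admissible_nonneg[OF adm k] emeasure_B_pos_if_matpow_pos[OF k]
      admissible_path[OF adm k] by blast
qed

lemma admissible_cycle_reachable:
  assumes adm: "admissible lam" and k: "k \<in> R"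
  shows "lam k = 0"
proof -
  have on_cycle: "lam i = 0" if i: "i \<in> {1..n}" and cycle: "leadsto C n i i" for i
  proof -
    obtain N where "N > 0" "0 \<le> lam i" "lam i \<le> \<alpha> ^ N * lam i"
      using admissible_leadsto[OF adm i cycle] .
    moreover have "\<alpha> ^ N < 1" using \<open>N > 0\<close> alpha_pos alpha_less_1 by (simp add: power_less_one_iff)
    ultimately show ?thesis
      using mult_strict_right_mono[of "\<alpha> ^ N" 1 "lam i"] by fastforce
  qed
  show ?thesis
  proof (cases "leadsto C n k k")
    case False
    then obtain i where "i \<in> {1..n}" "leadsto C n i i" "leadsto C n i k"
      using k by (auto simp: cycle_reachable_def)
    moreover have "k \<in> {1..n}" using k by (simp add: cycle_reachable_def)
    ultimately obtain N where "0 \<le> lam k" "lam k \<le> \<alpha> ^ N * 0"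
      using admissible_leadsto[OF adm] on_cycle by metis
    then show ?thesis by simp
  qed (use k on_cycle in \<open>auto simp: cycle_reachable_def\<close>)
qed

definition typical :: "'a \<Rightarrow> bool" where
  "typical x \<longleftrightarrow> (\<forall>k\<in>{1..n}. \<forall>j\<in>{1..n}. x \<in> B k \<longrightarrow> T x \<in> B j \<longrightarrow> C k j > 0)"

lemma AE_typical: "AE x in M. typical x"
  unfolding typical_def
proof (intro AE_finite_allI)
  fix k j assume k: "k \<in> {1..n}" and j: "j \<in> {1..n}"
  show "AE x in M. x \<in> B k \<longrightarrow> T x \<in> B j \<longrightarrow> C k j > 0"
  proof (cases "C k j > 0")
    case False
    then have "B k \<inter> preim A T (B j) \<in> null_sets M"
      using sets_transition[OF k j] by (simp add: Cmat_def null_setsI)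
    then show ?thesis
      using B_subset_A[OF k] by (auto elim!: eventually_mono[OF AE_not_in] simp: preim_def)
  qed simp
qed simp_all

lemma Mstar_cycle_reachable:
  assumes "lam 0 = 0" "\<forall>i\<in>R. lam i = 0" "typical x" "k \<in> R" "x \<in> B k"
  shows "Mstar A T B n \<alpha> lam x = 0"
proof -
  have k: "k \<in> {1..n}" using assms(4) by (simp add: cycle_reachable_def)
  show ?thesis
  proof (cases "T x \<in> A")
    case True
    then obtain j where j: "j \<in> {1..n}" "T x \<in> B j" by (rule cellE)
    then have "j \<in> R"
      using assms(3-5) k by (auto simp: typical_def intro: cycle_reachable_edge)
    then show ?thesis using assms j k by (simp add: Mstar_transition)
  qed (use assms k in \<open>simp add: Mstar_escape\<close>)
qed

abbreviation "lam\<^sub>0 \<equiv> escape_potential C n \<alpha>"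

lemma Mstar_escape_potential_neg:
  assumes "typical x" "k \<in> {1..n} - R" "x \<in> B k"
  shows "Mstar A T B n \<alpha> lam\<^sub>0 x < 0"
proof -
  have "lam\<^sub>0 0 = 0" by (simp add: escape_potential_eq_0)
  have k: "k \<in> {1..n}" using assms(2) by blast
  show ?thesis
  proof (cases "T x \<in> A")
    case True
    then obtain j where j: "j \<in> {1..n}" "T x \<in> B j" by (rule cellE)
    then have "lam\<^sub>0 j < \<alpha> * lam\<^sub>0 k"
      using assms alpha_pos by (auto simp: typical_def intro!: escape_potential_decreasing)
    moreover have "Mstar A T B n \<alpha> lam\<^sub>0 x = lam\<^sub>0 j - \<alpha> * lam\<^sub>0 k"
      using \<open>lam\<^sub>0 0 = 0\<close> k j(1) assms(3) j(2) by (rule Mstar_transition)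
    ultimately show ?thesis by simp
  next
    case False
    then have "Mstar A T B n \<alpha> lam\<^sub>0 x = - \<alpha> * lam\<^sub>0 k"
      using \<open>lam\<^sub>0 0 = 0\<close> k assms(3) by (rule Mstar_escape[rotated 3])
    moreover have "\<alpha> * lam\<^sub>0 k > 0"
      using alpha_pos escape_potential_pos[OF alpha_pos assms(2)] by simp
    ultimately show ?thesis by simp
  qed
qed

lemma admissible_escape_potential: "admissible lam\<^sub>0"
  unfolding admissible_def
proof
  show lam0: "lam\<^sub>0 0 = 0" by (simp add: escape_potential_eq_0)
  show "AE x in M. x \<in> A \<longrightarrow> Mstar A T B n \<alpha> lam\<^sub>0 x \<le> 0"
    using AE_typical
  proof (elim eventually_mono, intro impI)
    fix x assume "typical x" "x \<in> A"
    then obtain k where k: "k \<in> {1..n}" "x \<in> B k" by (metis cellE)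
    show "Mstar A T B n \<alpha> lam\<^sub>0 x \<le> 0"
    proof (cases "k \<in> R")
      case True
      then show ?thesis
        using lam0 \<open>typical x\<close> k
        by (simp add: Mstar_cycle_reachable escape_potential_eq_0)
    next
      case False
      then show ?thesis
        using Mstar_escape_potential_neg[OF \<open>typical x\<close> _ k(2)] k(1) by fastforce
    qed
  qed
qed

lemma AE_reduced_domain:
  "AE x in M. x \<in> reduced_domain M A T B n \<alpha> \<longleftrightarrow> x \<in> (\<Union>k\<in>R. B k)"
  using AE_typical
proof (elim eventually_mono)
  fix x assume "typical x"
  show "x \<in> reduced_domain M A T B n \<alpha> \<longleftrightarrow> x \<in> (\<Union>k\<in>R. B k)"
  proof (cases "x \<in> A")
    case True
    then obtain k where k: "k \<in> {1..n}" "x \<in> B k" by (rule cellE)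
    have "x \<in> (\<Union>k\<in>R. B k) \<longleftrightarrow> k \<in> R"
      using k cell_unique by (auto simp: cycle_reachable_def)
    moreover have "x \<in> reduced_domain M A T B n \<alpha> \<longleftrightarrow> k \<in> R"
    proof (cases "k \<in> R")
      case True
      then show ?thesis
        using \<open>x \<in> A\<close> \<open>typical x\<close> k admissible_cycle_reachable
        by (auto simp: mem_reduced_domain_iff admissible_def intro!: Mstar_cycle_reachable)
    next
      case False
      then have "Mstar A T B n \<alpha> lam\<^sub>0 x \<noteq> 0"
        using Mstar_escape_potential_neg[OF \<open>typical x\<close> _ k(2)] k(1) by fastforce
      then show ?thesis
        using False admissible_escape_potential by (auto simp: mem_reduced_domain_iff)
    qed
    ultimately show ?thesis by simp
  next
    case False
    then show ?thesis
      using B_subset_A by (auto simp: mem_reduced_domain_iff cycle_reachable_def)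
  qed
qed

lemma sets_reduced_domain: "reduced_domain M A T B n \<alpha> \<in> sets M"
proof -
  define P where
    "P x \<longleftrightarrow> (\<forall>lam. admissible lam \<longrightarrow> step_fun lam (T x) - \<alpha> * step_fun lam x = 0)" for x
  have "reduced_domain M A T B n \<alpha> = {x \<in> A. P x}"
    by (auto simp: mem_reduced_domain_iff P_def admissible_def Mstar_eq_step_fun)
  also have "\<dots> = (\<Union>k\<in>{1..n}. {x \<in> B k - preim A T A. P x} \<union>
                     (\<Union>j\<in>{1..n}. {x \<in> B k \<inter> preim A T (B j). P x}))"
    using Union_B by (auto simp: preim_def)
  also have "\<dots> \<in> sets M"
  proof (intro sets.finite_UN sets.Un ballI finite_atLeastAtMost)
    fix k j assume k: "k \<in> {1..n}" and j: "j \<in> {1..n}"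
    show "{x \<in> B k \<inter> preim A T (B j). P x} \<in> sets M"
      using sets_transition[OF k j] k j
      by (intro Collect_in_sets_if_constant) (auto simp: preim_def step_fun_cell P_def)
  next
    fix k assume k: "k \<in> {1..n}"
    show "{x \<in> B k - preim A T A. P x} \<in> sets M"
      using sets_B[OF k] sets_preim[OF sets_A] k B_subset_A[OF k]
      by (intro Collect_in_sets_if_constant)
         (auto simp: preim_def step_fun_cell step_fun_outside P_def)
  qed
  finally show ?thesis .
qed

end

theorem lemma6:
  fixes M :: "'a measure" and A :: "'a set" and T :: "'a \<Rightarrow> 'a"
    and B :: "nat \<Rightarrow> 'a set" and n :: nat and \<alpha> :: real
  assumes sys: "nonsingular_open_system M A T"
    and Ainf0: "emeasure M (Ainf A T) = 0"
    and alpha: "0 < \<alpha>" "\<alpha> < 1"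
    and Bmeas: "\<forall>k\<in>{1..n}. B k \<in> sets M"
    and Bdisj: "\<forall>k\<in>{1..n}. \<forall>j\<in>{1..n}. k \<noteq> j \<longrightarrow> B k \<inter> B j = {}"
    and Bcover: "(\<Union>k\<in>{1..n}. B k) = A"
  shows "reduced_domain M A T B n \<alpha> \<in> sets M \<and>
         (AE x in M. x \<in> reduced_domain M A T B n \<alpha> \<longleftrightarrow>
            x \<in> (\<Union>k\<in>{k \<in> {1..n}. leadsto (Cmat M A T B) n k k \<or>
                     (\<exists>i\<in>{1..n}. leadsto (Cmat M A T B) n i i \<and> leadsto (Cmat M A T B) n i k)}. B k))"
proof -
  interpret partitioned_open_system M A T B n \<alpha>
    using assms by unfold_locales (auto simp: nonsingular_open_def)
  show ?thesis
    using sets_reduced_domain AE_reduced_domain unfolding cycle_reachable_def by simp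
qed

end
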